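(* Let $V\in(\mathbb{R}\cup\{-\infty\})^{n\times p}$ have no row and no column identically equal to $-\infty$, and let $T=T_V:(\mathbb{R}\cup\{-\infty\})^n\to(\mathbb{R}\cup\{-\infty\})^n$ be the operator $$T_i(x)=\inf_{k\in[p],\,(i,k)\in E}\Big[-V_{ik}+\max_{j\in[n],\,j\neq i}(V_{jk}+x_j)\Big],\qquad i\in[n],$$ where $E=\{(i,k)\in[n]\times[p]: V_{ik}\neq-\infty\}$. Then $\rho(T)\le 0$ and $$-\rho(T)=\operatorname{inrad}(\operatorname{Col}(V)).$$ Moreover, if $\rho(T)$ is finite, then for any vector $a\in\mathbb{R}^n$ such that $T(a)\le \rho(T)+a$, the Hilbert ball $B(-a,-\rho(T))$ is included in $\operatorname{Col}(V)\cap\mathbb{R}^n$ and has maximal radius among Hilbert balls centered at a point of $\mathbb{R}^n$ and included in $\operatorname{Col}(V)$.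
   Context: Write $\mathbb{R}_{\max}=\mathbb{R}\cup\{-\infty\}$, with conventions $-\infty+c=-\infty$ for $c\in\mathbb{R}_{\max}$ and the maximum of an empty family equal to $-\infty$; $\bot$ denotes the identically $-\infty$ vector, and $\lambda+x$ denotes the vector $(\lambda+x_i)_i$. For a matrix $V$, $\operatorname{Col}(V)=\{Vx: x\in\mathbb{R}_{\max}^p\}$ with $(Vx)_i=\max_{k}(V_{ik}+x_k)$ (the tropical column span). Hilbert's projective metric on $\mathbb{R}_{\max}^n$: for $x,y$ not both $\bot$, $d(x,y)=\inf\{\lambda-\mu:\lambda,\mu\in\mathbb{R},\ \mu+y_i\le x_i\le\lambda+y_i\ \forall i\}\in[0,+\infty]$, and $d(\bot,\bot)=0$. For $a\in\mathbb{R}^n$ and $r\in[0,+\infty]$, $B(a,r)=\{x\in\mathbb{R}_{\max}^n: d(a,x)\le r\}$. The inner radius $\operatorname{inrad}(\mathcal{C})$ of a set $\mathcal{C}\subset\mathbb{R}_{\max}^n$ is the supremum of the radii $r$ of Hilbert balls $B(a,r)$ with $a\in\mathbb{R}^n$ included in the tropical cone generated by $\mathcal C$ (for $\mathcal C=\operatorname{Col}(V)$, included in $\operatorname{Col}(V)$). For an order-preserving, continuous map $T:\mathbb{R}_{\max}^n\to\mathbb{R}_{\max}^n$ commuting with addition of constants, $\rho(T)=\sup\{\lambda\in\mathbb{R}\cup\{-\infty\}: \exists u\in\mathbb{R}_{\max}^n,\ u\neq\bot,\ T(u)=\lambda+u\}$. *)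

theory Defs
  imports "HOL-Analysis.Analysis" "HOL-Library.Extended_Real"
begin

text \<open>R_max = R with -infinity, represented inside ereal by excluding +infinity.
Vectors of R_max^n are functions 'n => ereal with no +infinity entry.\<close>

definition Rmax_vecs :: "('n \<Rightarrow> ereal) set" where
  "Rmax_vecs = {x. \<forall>i. x i \<noteq> \<infinity>}"

definition botv :: "'n \<Rightarrow> ereal" where
  "botv = (\<lambda>_. -\<infinity>)"

definition trop_mv :: "('n \<Rightarrow> 'p \<Rightarrow> ereal) \<Rightarrow> ('p \<Rightarrow> ereal) \<Rightarrow> 'n \<Rightarrow> ereal" where
  "trop_mv V x = (\<lambda>i. SUP k. V i k + x k)"

definition Col :: "('n \<Rightarrow> 'p::finite \<Rightarrow> ereal) \<Rightarrow> ('n \<Rightarrow> ereal) set" where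
  "Col V = {trop_mv V x | x. x \<in> Rmax_vecs}"

definition hilbert_dist :: "('n \<Rightarrow> ereal) \<Rightarrow> ('n \<Rightarrow> ereal) \<Rightarrow> ereal" where
  "hilbert_dist x y =
     (if x = botv \<and> y = botv then 0
      else Inf {ereal (l - m) | l m. \<forall>i. ereal m + y i \<le> x i \<and> x i \<le> ereal l + y i})"

definition hball :: "('n \<Rightarrow> real) \<Rightarrow> ereal \<Rightarrow> ('n \<Rightarrow> ereal) set" where
  "hball a r = {x \<in> Rmax_vecs. hilbert_dist (\<lambda>i. ereal (a i)) x \<le> r}"

definition inrad_Col :: "('n \<Rightarrow> 'p::finite \<Rightarrow> ereal) \<Rightarrow> ereal" where
  "inrad_Col V = Sup {r. 0 \<le> r \<and> (\<exists>a. hball a r \<subseteq> Col V)}"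

definition T_op :: "('n \<Rightarrow> 'p \<Rightarrow> ereal) \<Rightarrow> ('n \<Rightarrow> ereal) \<Rightarrow> 'n \<Rightarrow> ereal" where
  "T_op V x = (\<lambda>i. INF k \<in> {k. V i k \<noteq> -\<infinity>}.
                 - V i k + (SUP j \<in> {j. j \<noteq> i}. V j k + x j))"

definition rho :: "(('n \<Rightarrow> ereal) \<Rightarrow> 'n \<Rightarrow> ereal) \<Rightarrow> ereal" where
  "rho T = Sup {lam. lam \<noteq> \<infinity> \<and>
      (\<exists>u \<in> Rmax_vecs. u \<noteq> botv \<and> T u = (\<lambda>i. lam + u i))}"

end

theory Submission
  imports Defs
begin

text \<open>
If \<open>T(c) \<le> \<mu> + c\<close> for a finite vector \<open>c\<close>, then every eigenvalue of \<open>T\<close> is at most \<open>\<mu>\<close>,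
since \<open>T\<close> is order preserving and commutes with the addition of constants. Conversely, if
there is no such \<open>c\<close>, the conjugate \<open>exp \<circ> T \<circ> log\<close>, a continuous map of the nonnegative
orthant, has by Brouwer's theorem a nonnegative eigenvector with eigenvalue at least \<open>exp \<mu>\<close>.
Hence \<open>\<rho>(T)\<close> is the infimum of these \<open>\<mu>\<close>.

For \<open>r \<ge> 0\<close>, the inequality \<open>T(c) \<le> -r + c\<close> holds exactly when the Hilbert ball \<open>B(-c, r)\<close>
lies in \<open>Col(V)\<close>: a point \<open>x\<close> of the ball is \<open>V\<close> applied to its residuation
\<open>k \<mapsto> min\<^sub>j (x\<^sub>j - V\<^sub>j\<^sub>k)\<close>, and conversely the points \<open>-c + r e\<^sub>l\<close> of the ball force the
inequality. So the radii of inscribed balls are the numbers \<open>-\<mu> \<ge> 0\<close> above, which gives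
\<open>inrad(Col V) = -\<rho>(T)\<close>.
\<close>

lemma INF_finite_attained:
  fixes g :: "'a \<Rightarrow> 'b::complete_linorder"
  assumes "finite A" "A \<noteq> {}"
  obtains a where "a \<in> A" "(INF x\<in>A. g x) = g a"
proof -
  have "Min (g ` A) \<in> g ` A" using assms by simp
  moreover have "Min (g ` A) = (INF x\<in>A. g x)" using assms by (simp add: Min_Inf)
  ultimately show ?thesis using that by auto
qed

lemma SUP_finite_attained:
  fixes g :: "'a \<Rightarrow> 'b::complete_linorder"
  assumes "finite A" "A \<noteq> {}"
  obtains a where "a \<in> A" "(SUP x\<in>A. g x) = g a"
proof -
  have "Max (g ` A) \<in> g ` A" using assms by simp
  moreover have "Max (g ` A) = (SUP x\<in>A. g x)" using assms by (simp add: Max_Sup)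
  ultimately show ?thesis using that by auto
qed

lemma SUP_finite_not_PInf:
  fixes f :: "'a \<Rightarrow> ereal"
  assumes "finite A" "\<And>a. a \<in> A \<Longrightarrow> f a \<noteq> \<infinity>"
  shows "(SUP a\<in>A. f a) \<noteq> \<infinity>"
proof (cases "A = {}")
  case False
  then obtain a where "a \<in> A" "(SUP a\<in>A. f a) = f a" using SUP_finite_attained assms(1) by blast
  then show ?thesis using assms(2) by simp
qed (simp add: bot_ereal_def)

lemma mono_on_INF_finite:
  fixes f :: "'b::complete_linorder \<Rightarrow> 'c::linorder"
  assumes "mono_on S f" "finite A" "A \<noteq> {}" "g ` A \<subseteq> S"
  shows "f (INF x\<in>A. g x) = Min ((\<lambda>x. f (g x)) ` A)"
proof -
  obtain a where a: "a \<in> A" "(INF x\<in>A. g x) = g a"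
    using INF_finite_attained[OF assms(2,3)] .
  have "Min ((\<lambda>x. f (g x)) ` A) = f (g a)"
  proof (rule Min_eqI)
    fix z assume "z \<in> (\<lambda>x. f (g x)) ` A"
    then obtain x where "x \<in> A" "z = f (g x)" by blast
    moreover have "g a \<le> g x" using a \<open>x \<in> A\<close> by (metis INF_lower)
    ultimately show "f (g a) \<le> z" using assms(1,4) a(1) by (auto elim!: mono_onD)
  qed (use assms(2) a in auto)
  then show ?thesis using a by simp
qed

lemma mono_on_SUP_finite:
  fixes f :: "'b::complete_linorder \<Rightarrow> 'c::linorder"
  assumes "mono_on S f" "finite A" "A \<noteq> {}" "g ` A \<subseteq> S"
  shows "f (SUP x\<in>A. g x) = Max ((\<lambda>x. f (g x)) ` A)"
proof -
  obtain a where a: "a \<in> A" "(SUP x\<in>A. g x) = g a"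
    using SUP_finite_attained[OF assms(2,3)] .
  have "Max ((\<lambda>x. f (g x)) ` A) = f (g a)"
  proof (rule Max_eqI)
    fix z assume "z \<in> (\<lambda>x. f (g x)) ` A"
    then obtain x where "x \<in> A" "z = f (g x)" by blast
    moreover have "g x \<le> g a" using a \<open>x \<in> A\<close> by (metis SUP_upper)
    ultimately show "z \<le> f (g a)" using assms(1,4) a(1) by (auto elim!: mono_onD)
  qed (use assms(2) a in auto)
  then show ?thesis using a by simp
qed

lemma continuous_on_Min_image:
  fixes f :: "'b \<Rightarrow> 'a::topological_space \<Rightarrow> real"
  assumes "finite K" "K \<noteq> {}" "\<And>k. k \<in> K \<Longrightarrow> continuous_on S (f k)"
  shows "continuous_on S (\<lambda>x. Min ((\<lambda>k. f k x) ` K))"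
  using assms
proof (induction K rule: finite_ne_induct)
  case (insert a K)
  have "(\<lambda>x. Min ((\<lambda>k. f k x) ` insert a K)) = (\<lambda>x. min (f a x) (Min ((\<lambda>k. f k x) ` K)))"
    using insert.hyps by auto
  then show ?case using insert by (auto intro!: continuous_on_min)
qed simp

lemma continuous_on_Max_insert_image:
  fixes f :: "'b \<Rightarrow> 'a::topological_space \<Rightarrow> real"
  assumes "finite J" "continuous_on S g" "\<And>j. j \<in> J \<Longrightarrow> continuous_on S (f j)"
  shows "continuous_on S (\<lambda>x. Max (insert (g x) ((\<lambda>j. f j x) ` J)))"
  using assms
proof (induction J rule: finite_induct)
  case (insert a J)
  have eq: "(\<lambda>x. Max (insert (g x) ((\<lambda>j. f j x) ` insert a J)))
      = (\<lambda>x. max (f a x) (Max (insert (g x) ((\<lambda>j. f j x) ` J))))"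
    using insert.hyps
    by (intro ext) (metis Max_insert finite_imageI finite_insert image_insert insert_commute insert_not_empty)
  show ?case unfolding eq using insert by (intro continuous_on_max) auto
qed simp

section \<open>Eigenvalues of monotone homogeneous maps\<close>

definition supereigenvector :: "(('n \<Rightarrow> ereal) \<Rightarrow> 'n \<Rightarrow> ereal) \<Rightarrow> real \<Rightarrow> ('n \<Rightarrow> real) \<Rightarrow> bool" where
  "supereigenvector T \<mu> c \<longleftrightarrow> (\<forall>i. T (\<lambda>j. ereal (c j)) i \<le> ereal \<mu> + ereal (c i))"

lemma supereigenvector_mono:
  "supereigenvector T \<mu> c \<Longrightarrow> \<mu> \<le> \<nu> \<Longrightarrow> supereigenvector T \<nu> c"
  unfolding supereigenvector_def by (meson add_right_mono ereal_less_eq(3) order_trans)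

lemma eigenvalue_le_supereigenvalue:
  fixes T :: "('n::finite \<Rightarrow> ereal) \<Rightarrow> 'n \<Rightarrow> ereal"
  assumes mono: "\<And>u w i. (\<And>j. u j \<le> w j) \<Longrightarrow> T u i \<le> T w i"
    and shift: "\<And>t u i. T (\<lambda>j. ereal t + u j) i = ereal t + T u i"
    and u: "u \<in> Rmax_vecs" "u \<noteq> botv" and eig: "T u = (\<lambda>i. lam + u i)"
    and c: "supereigenvector T \<mu> c"
  shows "lam \<le> ereal \<mu>"
proof -
  \<comment> \<open>\<open>u \<le> t + c\<close> for the least such \<open>t\<close>, with equality at a finite coordinate \<open>i0\<close> of \<open>u\<close>\<close>
  obtain i0 where i0: "(SUP i. u i - ereal (c i)) = u i0 - ereal (c i0)"
    using SUP_finite_attained[of "UNIV::'n set" "\<lambda>i. u i - ereal (c i)"] by auto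
  have upper: "u j - ereal (c j) \<le> u i0 - ereal (c i0)" for j
    using i0 by (metis SUP_upper UNIV_I)
  have u_not_PInf: "u j \<noteq> \<infinity>" for j using u(1) by (simp add: Rmax_vecs_def)
  obtain j1 where "u j1 \<noteq> -\<infinity>" using u(2) by (auto simp: botv_def fun_eq_iff)
  then have "u i0 \<noteq> -\<infinity>"
    using upper[of j1] u_not_PInf[of j1] by (cases "u j1"; cases "u i0") auto
  then obtain a where a: "u i0 = ereal a" using u_not_PInf[of i0] by (cases "u i0") auto
  define t where "t = a - c i0"
  have u_le: "u j \<le> ereal t + ereal (c j)" for j
    using upper[of j] u_not_PInf[of j] a by (cases "u j") (auto simp: t_def)
  have "lam + u i0 = T u i0" using eig by simp
  also have "\<dots> \<le> T (\<lambda>j. ereal t + ereal (c j)) i0" by (rule mono) (rule u_le)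
  also have "\<dots> = ereal t + T (\<lambda>j. ereal (c j)) i0" by (rule shift)
  also have "\<dots> \<le> ereal t + (ereal \<mu> + ereal (c i0))"
    using c by (intro add_left_mono) (simp add: supereigenvector_def)
  finally have "lam + ereal a \<le> ereal (\<mu> + a)" using a by (simp add: t_def add.commute)
  then show ?thesis by (cases lam) auto
qed

lemma rho_le_supereigenvalue:
  fixes T :: "('n::finite \<Rightarrow> ereal) \<Rightarrow> 'n \<Rightarrow> ereal"
  assumes "\<And>u w i. (\<And>j. u j \<le> w j) \<Longrightarrow> T u i \<le> T w i"
    and "\<And>t u i. T (\<lambda>j. ereal t + u j) i = ereal t + T u i"
    and "supereigenvector T \<mu> c"
  shows "rho T \<le> ereal \<mu>"
  unfolding rho_def
  by (rule Sup_least) (use eigenvalue_le_supereigenvalue[OF assms(1,2) _ _ _ assms(3)] in blast)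

lemma T_op_attained:
  fixes V :: "'n::finite \<Rightarrow> 'p::finite \<Rightarrow> ereal"
  assumes "\<exists>k. V i k \<noteq> -\<infinity>"
  obtains k where "V i k \<noteq> -\<infinity>" "T_op V u i = - V i k + (SUP j\<in>{j. j \<noteq> i}. V j k + u j)"
proof -
  have "finite {k. V i k \<noteq> -\<infinity>}" "{k. V i k \<noteq> -\<infinity>} \<noteq> {}" using assms by auto
  from INF_finite_attained[OF this] that show ?thesis unfolding T_op_def by blast
qed

lemma T_op_le:
  "V i k \<noteq> -\<infinity> \<Longrightarrow> T_op V u i \<le> - V i k + (SUP j\<in>{j. j \<noteq> i}. V j k + u j)"
  unfolding T_op_def by (rule INF_lower) simp

lemma T_op_mono:
  "(\<And>j. u j \<le> w j) \<Longrightarrow> T_op V u i \<le> T_op V w i"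
  unfolding T_op_def by (intro INF_superset_mono SUP_subset_mono add_left_mono order_refl)

lemma T_op_shift:
  fixes V :: "'n::finite \<Rightarrow> 'p::finite \<Rightarrow> ereal"
  assumes row: "\<forall>i. \<exists>k. V i k \<noteq> -\<infinity>"
  shows "T_op V (\<lambda>j. ereal t + u j) i = ereal t + T_op V u i"
proof -
  have SUP_shift: "(SUP j\<in>J. V j k + (ereal t + u j)) = ereal t + (SUP j\<in>J. V j k + u j)" for J k
  proof (cases "J = {}")
    case False
    then show ?thesis by (simp add: add.left_commute SUP_ereal_add_right)
  qed (simp add: bot_ereal_def)
  have term_shift: "- V i k + (SUP j\<in>{j. j \<noteq> i}. V j k + (ereal t + u j))
      = ereal t + (- V i k + (SUP j\<in>{j. j \<noteq> i}. V j k + u j))" for k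
    unfolding SUP_shift by (rule add.left_commute)
  have "mono (\<lambda>x::ereal. ereal t + x)" by (rule monoI) (rule add_left_mono)
  moreover have "finite {k. V i k \<noteq> -\<infinity>}" "{k. V i k \<noteq> -\<infinity>} \<noteq> {}" using row by auto
  ultimately show ?thesis
    unfolding T_op_def term_shift
    by (simp add: mono_on_INF_finite[where S=UNIV] Min_Inf image_image)
qed

lemma T_op_not_PInf:
  fixes V :: "'n::finite \<Rightarrow> 'p::finite \<Rightarrow> ereal"
  assumes V: "\<forall>i k. V i k \<noteq> \<infinity>" and row: "\<forall>i. \<exists>k. V i k \<noteq> -\<infinity>" and u: "\<forall>j. u j \<noteq> \<infinity>"
  shows "T_op V u i \<noteq> \<infinity>"
proof -
  obtain k where k: "V i k \<noteq> -\<infinity>" using row by blast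
  have "(SUP j\<in>{j. j \<noteq> i}. V j k + u j) \<noteq> \<infinity>"
    using V u by (intro SUP_finite_not_PInf) simp_all
  moreover have "- V i k \<noteq> \<infinity>" using k by (cases "V i k") auto
  ultimately have "- V i k + (SUP j\<in>{j. j \<noteq> i}. V j k + u j) \<noteq> \<infinity>" by simp
  then show ?thesis using T_op_le[of V i k u] k by (auto simp: top_unique)
qed

lemma supereigenvector_T_op_zero:
  fixes V :: "'n::finite \<Rightarrow> 'p::finite \<Rightarrow> ereal"
  assumes V: "\<forall>i k. V i k \<noteq> \<infinity>" and row: "\<forall>i. \<exists>k. V i k \<noteq> -\<infinity>"
  obtains c where "supereigenvector (T_op V) 0 c"
proof -
  have "\<exists>k. V i k = (SUP k. V i k)" for i
    by (rule SUP_finite_attained[of "UNIV::'p set" "V i"]) auto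
  then obtain km where km: "\<And>i. V i (km i) = (SUP k. V i k)" by metis
  have km_max: "V i k \<le> V i (km i)" for i k
    using km by (metis SUP_upper UNIV_I)
  \<comment> \<open>\<open>c\<^sub>i = - max\<^sub>k V\<^sub>i\<^sub>k\<close> makes every term \<open>V\<^sub>j\<^sub>k + c\<^sub>j\<close> nonpositive\<close>
  define c where "c i = - real_of_ereal (V i (km i))" for i
  have c: "V i (km i) = ereal (- c i)" for i
  proof -
    obtain k where "V i k \<noteq> -\<infinity>" using row by blast
    then have "V i (km i) \<noteq> -\<infinity>" using km_max[of i k] by auto
    then show ?thesis using V by (cases "V i (km i)") (auto simp: c_def)
  qed
  have "T_op V (\<lambda>j. ereal (c j)) i \<le> ereal 0 + ereal (c i)" for i
  proof -
    have "(SUP j\<in>{j. j \<noteq> i}. V j (km i) + ereal (c j)) \<le> 0"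
    proof (rule SUP_least)
      fix j
      have "V j (km i) \<le> ereal (- c j)" using km_max[of j "km i"] c[of j] by simp
      then show "V j (km i) + ereal (c j) \<le> 0" by (cases "V j (km i)") auto
    qed
    then have "- V i (km i) + (SUP j\<in>{j. j \<noteq> i}. V j (km i) + ereal (c j)) \<le> - V i (km i) + 0"
      by (rule add_left_mono)
    moreover have "T_op V (\<lambda>j. ereal (c j)) i \<le> - V i (km i) + (SUP j\<in>{j. j \<noteq> i}. V j (km i) + ereal (c j))"
      using c[of i] by (intro T_op_le) simp
    ultimately show ?thesis using c[of i] by simp
  qed
  then show ?thesis using that unfolding supereigenvector_def by blast
qed

lemma rho_T_op_le_supereigenvalue:
  fixes V :: "'n::finite \<Rightarrow> 'p::finite \<Rightarrow> ereal"
  assumes row: "\<forall>i. \<exists>k. V i k \<noteq> -\<infinity>" and "supereigenvector (T_op V) \<mu> c"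
  shows "rho (T_op V) \<le> ereal \<mu>"
  using rho_le_supereigenvalue[OF T_op_mono T_op_shift[OF row] assms(2)] by blast

lemma rho_T_op_nonpos:
  fixes V :: "'n::finite \<Rightarrow> 'p::finite \<Rightarrow> ereal"
  assumes V: "\<forall>i k. V i k \<noteq> \<infinity>" and row: "\<forall>i. \<exists>k. V i k \<noteq> -\<infinity>"
  shows "rho (T_op V) \<le> 0"
proof -
  obtain c where "supereigenvector (T_op V) 0 c" using supereigenvector_T_op_zero[OF V row] .
  then show ?thesis using rho_T_op_le_supereigenvalue[OF row] by (simp add: zero_ereal_def)
qed

section \<open>Eigenvectors of continuous maps of the nonnegative orthant\<close>

definition prob_simplex :: "(real^'n) set" where
  "prob_simplex = {y. (\<forall>i. 0 \<le> y$i) \<and> (\<Sum>i\<in>UNIV. y$i) = 1}"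

lemma compact_prob_simplex: "compact (prob_simplex :: (real^'n::finite) set)"
  unfolding compact_eq_bounded_closed
proof
  show "bounded (prob_simplex :: (real^'n) set)"
    unfolding bounded_iff
  proof (intro exI ballI)
    fix y :: "real^'n" assume y: "y \<in> prob_simplex"
    have "norm y \<le> (\<Sum>i\<in>UNIV. \<bar>y$i\<bar>)" by (rule norm_le_l1_cart)
    also have "\<dots> = 1" using y by (simp add: prob_simplex_def)
    finally show "norm y \<le> 1" .
  qed
  have "prob_simplex = {y::real^'n. \<forall>i. 0 \<le> y$i} \<inter> {y. (\<Sum>i\<in>UNIV. y$i) = 1}"
    by (auto simp: prob_simplex_def)
  moreover have "closed {y::real^'n. (\<Sum>i\<in>UNIV. y$i) = 1}"
    by (rule closed_Collect_eq) (auto intro!: continuous_intros)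
  ultimately show "closed (prob_simplex :: (real^'n) set)"
    using closed_positive_orthant by (metis closed_Int)
qed

lemma convex_prob_simplex: "convex (prob_simplex :: (real^'n::finite) set)"
  unfolding convex_def prob_simplex_def
  by (auto simp: sum.distrib sum_distrib_left[symmetric])

lemma prob_simplex_nonempty: "(prob_simplex :: (real^'n::finite) set) \<noteq> {}"
proof -
  have "(\<chi> i. 1 / real CARD('n)) \<in> (prob_simplex :: (real^'n) set)"
    by (simp add: prob_simplex_def)
  then show ?thesis by blast
qed

text \<open>Replacing \<open>F\<close> by \<open>max F e\<close> keeps the normalising sum positive, so that Brouwer's
theorem applies on the simplex.\<close>

lemma perturbed_eigenvector_exists:
  fixes F :: "real^'n::finite \<Rightarrow> real^'n"
  assumes cont: "continuous_on {y. \<forall>i. 0 \<le> y$i} F" and e: "0 < e"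
  obtains y where "y \<in> prob_simplex" "\<And>i. 0 < y$i"
    "\<And>i. (\<Sum>j\<in>UNIV. max (F y $ j) e) * y$i = max (F y $ i) e"
proof -
  define S where "S y = (\<Sum>j\<in>UNIV. max (F y $ j) e)" for y
  have S_pos: "0 < S y" for y
    unfolding S_def using e by (intro sum_pos) auto
  define G where "G y = (\<chi> i. max (F y $ i) e / S y)" for y
  have cont_simplex: "continuous_on prob_simplex F"
    by (rule continuous_on_subset[OF cont]) (auto simp: prob_simplex_def)
  have "continuous_on prob_simplex G"
    unfolding G_def[abs_def] S_def[abs_def] using S_pos[unfolded S_def]
    by (intro continuous_intros cont_simplex) (auto simp: less_le)
  moreover have "G \<in> prob_simplex \<rightarrow> prob_simplex"
  proof
    fix y :: "real^'n"
    have "(\<Sum>i\<in>UNIV. G y $ i) = 1"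
      using S_pos[of y] unfolding G_def by (simp add: S_def sum_divide_distrib[symmetric])
    then show "G y \<in> prob_simplex"
      using S_pos[of y] e unfolding prob_simplex_def G_def by (auto intro: divide_nonneg_pos)
  qed
  ultimately obtain y where y: "y \<in> prob_simplex" "G y = y"
    using brouwer[OF compact_prob_simplex convex_prob_simplex prob_simplex_nonempty] by blast
  have "y$i = max (F y $ i) e / S y" for i using y(2) unfolding G_def by (auto simp: vec_eq_iff)
  then have "0 < y$i" "S y * y$i = max (F y $ i) e" for i
    using S_pos[of y] e by (simp_all add: less_max_iff_disj)
  then show ?thesis using that y(1) unfolding S_def by blast
qed

lemma nonneg_eigenvector_ge:
  fixes F :: "real^'n::finite \<Rightarrow> real^'n"
  assumes cont: "continuous_on {y. \<forall>i. 0 \<le> y$i} F"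
    and nonneg: "\<And>y i. \<forall>j. 0 \<le> y$j \<Longrightarrow> 0 \<le> F y $ i"
    and lower: "\<And>y s. 0 < s \<Longrightarrow> \<forall>i. 0 < y$i \<Longrightarrow> \<forall>i. F y $ i \<le> s * y$i \<Longrightarrow> \<mu> \<le> s"
  obtains y s where "y \<in> prob_simplex" "\<mu> \<le> s" "F y = s *\<^sub>R y"
proof -
  define e :: "nat \<Rightarrow> real" where "e m = inverse (real (Suc m))" for m
  have e_pos: "0 < e m" for m by (simp add: e_def)
  have "\<exists>y\<in>prob_simplex. (\<forall>i. 0 < y$i) \<and>
      (\<forall>i. (\<Sum>j\<in>UNIV. max (F y $ j) (e m)) * y$i = max (F y $ i) (e m))" for m
    using perturbed_eigenvector_exists[OF cont e_pos] by blast
  then obtain Y where Y: "\<And>m. Y m \<in> prob_simplex" "\<And>m i. 0 < Y m $ i"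
    "\<And>m i. (\<Sum>j\<in>UNIV. max (F (Y m) $ j) (e m)) * Y m $ i = max (F (Y m) $ i) (e m)"
    by metis
  define S where "S m = (\<Sum>j\<in>UNIV. max (F (Y m) $ j) (e m))" for m
  have S_eq: "S m * Y m $ i = max (F (Y m) $ i) (e m)" for m i
    using Y(3) unfolding S_def by simp
  have S_ge: "\<mu> \<le> S m" for m
  proof (rule lower[of "S m" "Y m"])
    show "0 < S m" unfolding S_def by (intro sum_pos) (simp_all add: less_max_iff_disj e_pos)
  qed (simp_all add: Y(2) S_eq)
  obtain y r where y: "y \<in> prob_simplex" and r: "strict_mono r" and lim: "(Y \<circ> r) \<longlonglongrightarrow> y"
    using compact_imp_seq_compact[OF compact_prob_simplex] Y(1) unfolding seq_compact_def by metis
  have y_nonneg: "\<forall>i. 0 \<le> y$i" using y by (simp add: prob_simplex_def)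
  have e_lim: "(\<lambda>m. e (r m)) \<longlonglongrightarrow> 0"
    using LIMSEQ_subseq_LIMSEQ[OF LIMSEQ_inverse_real_of_nat r] by (simp add: e_def o_def)
  have F_lim: "(\<lambda>m. F (Y (r m))) \<longlonglongrightarrow> F y"
    using lim y_nonneg Y(1)
    by (intro continuous_on_tendsto_compose[OF cont]) (auto simp: o_def prob_simplex_def)
  have max_lim: "(\<lambda>m. max (F (Y (r m)) $ i) (e (r m))) \<longlonglongrightarrow> F y $ i" for i
  proof -
    have "(\<lambda>m. max (F (Y (r m)) $ i) (e (r m))) \<longlonglongrightarrow> max (F y $ i) 0"
      by (intro tendsto_max tendsto_vec_nth F_lim e_lim)
    then show ?thesis using nonneg[OF y_nonneg, of i] by (simp add: max_absorb1)
  qed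
  define s where "s = (\<Sum>j\<in>UNIV. F y $ j)"
  have S_lim: "(\<lambda>m. S (r m)) \<longlonglongrightarrow> s"
    unfolding S_def s_def by (intro tendsto_sum max_lim)
  have "(\<lambda>m. S (r m) * Y (r m) $ i) \<longlonglongrightarrow> s * y$i" for i
    using lim by (intro tendsto_mult S_lim) (auto intro: tendsto_vec_nth simp: o_def)
  then have "F y $ i = s * y$i" for i using LIMSEQ_unique[OF max_lim] by (simp add: S_eq)
  then have "F y = s *\<^sub>R y" by (simp add: vec_eq_iff)
  moreover have "\<mu> \<le> s" using S_lim S_ge by (intro LIMSEQ_le_const) auto
  ultimately show ?thesis using that y by blast
qed

section \<open>The exponential conjugate of \<open>T_V\<close>\<close>

text \<open>The value \<open>0\<close> of \<open>exp_ereal\<close> at \<open>\<infinity>\<close> is junk, hence the hypotheses \<open>\<noteq> \<infinity>\<close> below.\<close>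

definition exp_ereal :: "ereal \<Rightarrow> real" where
  "exp_ereal z = (case z of ereal r \<Rightarrow> exp r | _ \<Rightarrow> 0)"

definition ln_ereal :: "real \<Rightarrow> ereal" where
  "ln_ereal y = (if 0 < y then ereal (ln y) else -\<infinity>)"

lemma exp_ereal_ereal [simp]: "exp_ereal (ereal r) = exp r"
  by (simp add: exp_ereal_def)

lemma exp_ereal_MInf [simp]: "exp_ereal (-\<infinity>) = 0"
  by (simp add: exp_ereal_def)

lemma exp_ereal_nonneg: "0 \<le> exp_ereal z"
  by (cases z) (auto simp: exp_ereal_def)

lemma exp_ereal_le_iff: "a \<noteq> \<infinity> \<Longrightarrow> b \<noteq> \<infinity> \<Longrightarrow> exp_ereal a \<le> exp_ereal b \<longleftrightarrow> a \<le> b"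
  by (cases a; cases b) auto

lemma exp_ereal_add: "a \<noteq> \<infinity> \<Longrightarrow> b \<noteq> \<infinity> \<Longrightarrow> exp_ereal (a + b) = exp_ereal a * exp_ereal b"
  by (cases a; cases b) (auto simp: exp_add)

lemma exp_ereal_ln_ereal: "0 \<le> y \<Longrightarrow> exp_ereal (ln_ereal y) = y"
  by (simp add: ln_ereal_def)

lemma exp_ereal_inject: "a \<noteq> \<infinity> \<Longrightarrow> b \<noteq> \<infinity> \<Longrightarrow> exp_ereal a = exp_ereal b \<Longrightarrow> a = b"
  by (metis exp_ereal_le_iff order_antisym order_refl)

lemma mono_on_exp_ereal: "mono_on {z. z \<noteq> \<infinity>} exp_ereal"
  by (rule mono_onI) (simp add: exp_ereal_le_iff)

lemma exp_ereal_SUP: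
  assumes "finite A" "\<And>a. a \<in> A \<Longrightarrow> g a \<noteq> \<infinity>"
  shows "exp_ereal (SUP a\<in>A. g a) = Max (insert 0 ((\<lambda>a. exp_ereal (g a)) ` A))"
proof (cases "A = {}")
  case False
  have "exp_ereal (SUP a\<in>A. g a) = Max ((\<lambda>a. exp_ereal (g a)) ` A)"
    using assms False by (intro mono_on_SUP_finite[OF mono_on_exp_ereal]) auto
  also have "\<dots> = Max (insert 0 ((\<lambda>a. exp_ereal (g a)) ` A))"
  proof -
    have "0 \<le> Max ((\<lambda>a. exp_ereal (g a)) ` A)"
      using assms(1) False by (auto simp: Max_ge_iff exp_ereal_nonneg)
    then show ?thesis using assms(1) False by (simp add: max_absorb2)
  qed
  finally show ?thesis .
qed (simp add: bot_ereal_def)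

definition T_op_exp :: "('n::finite \<Rightarrow> 'p::finite \<Rightarrow> ereal) \<Rightarrow> real^'n \<Rightarrow> real^'n" where
  "T_op_exp V y = (\<chi> i. Min ((\<lambda>k. exp_ereal (- V i k) *
      Max (insert 0 ((\<lambda>j. exp_ereal (V j k) * y$j) ` {j. j \<noteq> i}))) ` {k. V i k \<noteq> -\<infinity>}))"

lemma exp_ereal_T_op:
  fixes V :: "'n::finite \<Rightarrow> 'p::finite \<Rightarrow> ereal"
  assumes V: "\<forall>i k. V i k \<noteq> \<infinity>" and row: "\<forall>i. \<exists>k. V i k \<noteq> -\<infinity>" and u: "\<forall>j. u j \<noteq> \<infinity>"
  shows "exp_ereal (T_op V u i) = T_op_exp V (\<chi> j. exp_ereal (u j)) $ i"
proof -
  let ?S = "\<lambda>k. SUP j\<in>{j. j \<noteq> i}. V j k + u j"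
  have S: "?S k \<noteq> \<infinity>" "exp_ereal (?S k) = Max (insert 0 ((\<lambda>j. exp_ereal (V j k) * exp_ereal (u j)) ` {j. j \<noteq> i}))" for k
  proof -
    show "exp_ereal (?S k) = Max (insert 0 ((\<lambda>j. exp_ereal (V j k) * exp_ereal (u j)) ` {j. j \<noteq> i}))"
      using V u by (simp add: exp_ereal_SUP exp_ereal_add)
    show "?S k \<noteq> \<infinity>" using V u by (intro SUP_finite_not_PInf) simp_all
  qed
  have neg: "- V i k \<noteq> \<infinity>" if "V i k \<noteq> -\<infinity>" for k
    using that by (cases "V i k") auto
  have "finite {k. V i k \<noteq> -\<infinity>}" "{k. V i k \<noteq> -\<infinity>} \<noteq> {}" using row by auto
  then have "exp_ereal (T_op V u i) = Min ((\<lambda>k. exp_ereal (- V i k + ?S k)) ` {k. V i k \<noteq> -\<infinity>})"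
    unfolding T_op_def using S(1) neg
    by (intro mono_on_INF_finite[OF mono_on_exp_ereal]) auto
  also have "\<dots> = T_op_exp V (\<chi> j. exp_ereal (u j)) $ i"
    unfolding T_op_exp_def using S neg by (auto simp: exp_ereal_add intro!: arg_cong[where f=Min] image_cong)
  finally show ?thesis .
qed

lemma continuous_on_T_op_exp:
  fixes V :: "'n::finite \<Rightarrow> 'p::finite \<Rightarrow> ereal"
  assumes row: "\<forall>i. \<exists>k. V i k \<noteq> -\<infinity>"
  shows "continuous_on S (T_op_exp V)"
  unfolding T_op_exp_def using row
  by (intro continuous_on_vec_lambda continuous_on_Min_image continuous_on_Max_insert_image
      continuous_intros) auto

lemma T_op_exp_nonneg:
  fixes V :: "'n::finite \<Rightarrow> 'p::finite \<Rightarrow> ereal"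
  assumes row: "\<forall>i. \<exists>k. V i k \<noteq> -\<infinity>"
  shows "0 \<le> T_op_exp V y $ i"
proof -
  have "finite {k. V i k \<noteq> -\<infinity>}" "{k. V i k \<noteq> -\<infinity>} \<noteq> {}" using row by auto
  then show ?thesis
    unfolding T_op_exp_def by (auto simp: Min_ge_iff Max_ge_iff intro!: mult_nonneg_nonneg exp_ereal_nonneg)
qed

lemma exp_le_if_no_supereigenvector:
  fixes V :: "'n::finite \<Rightarrow> 'p::finite \<Rightarrow> ereal"
  assumes V: "\<forall>i k. V i k \<noteq> \<infinity>" and row: "\<forall>i. \<exists>k. V i k \<noteq> -\<infinity>"
    and none: "\<nexists>c. supereigenvector (T_op V) \<nu> c"
    and s: "0 < s" and y: "\<forall>i. 0 < y$i" and sub: "\<forall>i. T_op_exp V y $ i \<le> s * y$i"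
  shows "exp \<nu> \<le> s"
proof -
  define c where "c j = ln (y$j)" for j
  have y_c: "(\<chi> j. exp_ereal (ereal (c j))) = y" using y by (simp add: c_def vec_eq_iff)
  have "supereigenvector (T_op V) (ln s) c"
    unfolding supereigenvector_def
  proof
    fix i
    have "exp_ereal (T_op V (\<lambda>j. ereal (c j)) i) \<le> exp_ereal (ereal (ln s) + ereal (c i))"
      using sub y s exp_ereal_T_op[OF V row, of "\<lambda>j. ereal (c j)" i] by (simp add: y_c c_def exp_add)
    then show "T_op V (\<lambda>j. ereal (c j)) i \<le> ereal (ln s) + ereal (c i)"
      by (subst (asm) exp_ereal_le_iff) (simp_all add: T_op_not_PInf[OF V row])
  qed
  then have "\<nu> < ln s" using none supereigenvector_mono by (meson not_le)
  then show "exp \<nu> \<le> s" using s by (metis exp_less_cancel_iff exp_ln less_imp_le)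
qed

lemma ln_le_rho_if_eigenvector_T_op_exp:
  fixes V :: "'n::finite \<Rightarrow> 'p::finite \<Rightarrow> ereal"
  assumes V: "\<forall>i k. V i k \<noteq> \<infinity>" and row: "\<forall>i. \<exists>k. V i k \<noteq> -\<infinity>"
    and y: "y \<in> prob_simplex" and s: "0 < s" and eig: "T_op_exp V y = s *\<^sub>R y"
  shows "ereal (ln s) \<le> rho (T_op V)"
proof -
  have y_nonneg: "0 \<le> y$j" for j using y by (simp add: prob_simplex_def)
  define u where "u j = ln_ereal (y$j)" for j
  have u_not_PInf: "\<forall>j. u j \<noteq> \<infinity>" by (simp add: u_def ln_ereal_def)
  have y_u: "(\<chi> j. exp_ereal (u j)) = y" using y_nonneg by (simp add: u_def exp_ereal_ln_ereal vec_eq_iff)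
  have "T_op V u = (\<lambda>i. ereal (ln s) + u i)"
  proof
    fix i
    show "T_op V u i = ereal (ln s) + u i"
    proof (rule exp_ereal_inject)
      show "exp_ereal (T_op V u i) = exp_ereal (ereal (ln s) + u i)"
        using eig s u_not_PInf y_nonneg
        by (simp add: exp_ereal_T_op[OF V row u_not_PInf] y_u exp_ereal_add u_def exp_ereal_ln_ereal)
    qed (use T_op_not_PInf[OF V row u_not_PInf] u_not_PInf in auto)
  qed
  moreover have "u \<noteq> botv"
  proof -
    have "(\<Sum>j\<in>UNIV. y$j) \<noteq> 0" using y by (simp add: prob_simplex_def)
    then obtain j where "y$j \<noteq> 0" by (rule sum.not_neutral_contains_not_neutral)
    then have "u j \<noteq> -\<infinity>" using y_nonneg[of j] by (simp add: u_def ln_ereal_def)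
    then show ?thesis by (auto simp: botv_def)
  qed
  moreover have "u \<in> Rmax_vecs" using u_not_PInf by (simp add: Rmax_vecs_def)
  ultimately show ?thesis unfolding rho_def by (intro Sup_upper) auto
qed

lemma rho_T_op_ge_if_no_supereigenvector:
  fixes V :: "'n::finite \<Rightarrow> 'p::finite \<Rightarrow> ereal"
  assumes V: "\<forall>i k. V i k \<noteq> \<infinity>" and row: "\<forall>i. \<exists>k. V i k \<noteq> -\<infinity>"
    and none: "\<nexists>c. supereigenvector (T_op V) \<nu> c"
  shows "ereal \<nu> \<le> rho (T_op V)"
proof -
  obtain y s where y: "y \<in> prob_simplex" and s: "exp \<nu> \<le> s" and eig: "T_op_exp V y = s *\<^sub>R y"
    using nonneg_eigenvector_ge[of "T_op_exp V" "exp \<nu>"] continuous_on_T_op_exp[OF row]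
      T_op_exp_nonneg[OF row] exp_le_if_no_supereigenvector[OF V row none] by metis
  have s_pos: "0 < s" using s by (meson exp_gt_zero less_le_trans)
  have "ereal \<nu> \<le> ereal (ln s)" using s s_pos by (simp add: ln_ge_iff)
  also have "\<dots> \<le> rho (T_op V)" by (rule ln_le_rho_if_eigenvector_T_op_exp[OF V row y s_pos eig])
  finally show ?thesis .
qed

section \<open>Hilbert balls inside the column span\<close>

lemma mem_hball_Inf_iff:
  "x \<in> hball a (ereal r) \<longleftrightarrow> x \<in> Rmax_vecs \<and>
    Inf {ereal (l - m) | l m. \<forall>i. ereal m + x i \<le> ereal (a i) \<and> ereal (a i) \<le> ereal l + x i} \<le> ereal r"
proof -
  have "(\<lambda>i. ereal (a i)) \<noteq> botv" by (auto simp: botv_def fun_eq_iff)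
  then show ?thesis by (simp add: hball_def hilbert_dist_def)
qed

lemma mem_hballD:
  fixes a :: "'n::finite \<Rightarrow> real"
  assumes "x \<in> hball a (ereal r)"
  obtains xr where "x = (\<lambda>i. ereal (xr i))" "\<And>i j. (a i - xr i) - (a j - xr j) \<le> r"
proof -
  let ?bracket = "\<lambda>l m. \<forall>i. ereal m + x i \<le> ereal (a i) \<and> ereal (a i) \<le> ereal l + x i"
  have x_Rmax: "x \<in> Rmax_vecs" and dist_le: "Inf {ereal (l - m) | l m. ?bracket l m} \<le> ereal r"
    using assms by (simp_all add: mem_hball_Inf_iff)
  have bracket: "\<exists>l m. ?bracket l m \<and> l - m < r + \<delta>" if "0 < \<delta>" for \<delta>
  proof -
    have "Inf {ereal (l - m) | l m. ?bracket l m} < ereal (r + \<delta>)"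
      using dist_le by (rule le_less_trans) (simp add: that)
    then obtain l m where "?bracket l m" "ereal (l - m) < ereal (r + \<delta>)"
      by (auto simp: Inf_less_iff)
    then show ?thesis by auto
  qed
  obtain l0 where l0: "\<forall>i. ereal (a i) \<le> ereal l0 + x i" using bracket[of 1] by (meson zero_less_one)
  define xr where "xr i = real_of_ereal (x i)" for i
  have "\<bar>x i\<bar> \<noteq> \<infinity>" for i
    using l0[rule_format, of i] x_Rmax by (cases "x i") (auto simp: Rmax_vecs_def)
  then have x: "x = (\<lambda>i. ereal (xr i))" by (simp add: xr_def fun_eq_iff ereal_real')
  have "(a i - xr i) - (a j - xr j) \<le> r" for i j
  proof (rule field_le_epsilon)
    fix \<delta> :: real assume "0 < \<delta>"
    then obtain l m where lm: "?bracket l m" "l - m < r + \<delta>" using bracket by blast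
    then have "ereal (a i) \<le> ereal (l + xr i)" "ereal (m + xr j) \<le> ereal (a j)"
      using x by (metis plus_ereal.simps(1))+
    then show "(a i - xr i) - (a j - xr j) \<le> r + \<delta>" using lm(2) by simp
  qed
  with x show ?thesis using that by blast
qed

lemma mem_hballI:
  fixes a :: "'n::finite \<Rightarrow> real"
  assumes osc: "\<And>i j. (a i - xr i) - (a j - xr j) \<le> r"
  shows "(\<lambda>i. ereal (xr i)) \<in> hball a (ereal r)"
proof -
  define d where "d i = a i - xr i" for i
  have "Max (range d) \<in> range d" "Min (range d) \<in> range d" by simp_all
  then obtain i0 j0 where i0: "d i0 = Max (range d)" and j0: "d j0 = Min (range d)" by (metis imageE)
  have "d j0 \<le> d i" "d i \<le> d i0" for i unfolding i0 j0 by simp_all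
  then have "\<forall>i. ereal (d j0) + ereal (xr i) \<le> ereal (a i) \<and> ereal (a i) \<le> ereal (d i0) + ereal (xr i)"
    by (auto simp: d_def algebra_simps)
  then have "Inf {ereal (l - m) | l m. \<forall>i. ereal m + ereal (xr i) \<le> ereal (a i) \<and> ereal (a i) \<le> ereal l + ereal (xr i)}
      \<le> ereal (d i0 - d j0)"
    by (intro Inf_lower) blast
  also have "\<dots> \<le> ereal r" using osc by (simp add: d_def)
  finally show ?thesis by (simp add: mem_hball_Inf_iff Rmax_vecs_def)
qed

lemma hball_subset_finite:
  fixes a :: "'n::finite \<Rightarrow> real"
  shows "hball a (ereal r) \<subseteq> {x. \<forall>i. \<bar>x i\<bar> \<noteq> \<infinity>}"
  by (auto elim: mem_hballD)

text \<open>The residuation of \<open>x\<close>: the greatest \<open>z\<close> with \<open>trop_mv V z \<le> x\<close>.\<close>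

definition residual :: "('n \<Rightarrow> 'p \<Rightarrow> ereal) \<Rightarrow> ('n \<Rightarrow> real) \<Rightarrow> 'p \<Rightarrow> ereal" where
  "residual V x k = (INF j. ereal (x j) - V j k)"

lemma residual_not_PInf:
  assumes V: "\<forall>i k. V i k \<noteq> \<infinity>" and col: "\<forall>k. \<exists>i. V i k \<noteq> -\<infinity>"
  shows "residual V x k \<noteq> \<infinity>"
proof -
  obtain j where "V j k \<noteq> -\<infinity>" using col by blast
  then obtain w where w: "V j k = ereal w" using V by (cases "V j k") auto
  have "residual V x k \<le> ereal (x j) - V j k" unfolding residual_def by (rule INF_lower) simp
  then show ?thesis using w by auto
qed

lemma trop_mv_residual_le:
  assumes V: "\<forall>i k. V i k \<noteq> \<infinity>" and col: "\<forall>k. \<exists>i. V i k \<noteq> -\<infinity>"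
  shows "trop_mv V (residual V x) i \<le> ereal (x i)"
  unfolding trop_mv_def
proof (rule SUP_least)
  fix k
  show "V i k + residual V x k \<le> ereal (x i)"
  proof (cases "V i k")
    case (real v)
    have "residual V x k \<le> ereal (x i) - V i k" unfolding residual_def by (rule INF_lower) simp
    then have "residual V x k \<le> ereal (x i - v)" using real by simp
    then have "ereal v + residual V x k \<le> ereal v + ereal (x i - v)" by (rule add_left_mono)
    then show ?thesis using real by simp
  next
    case MInf
    then show ?thesis using residual_not_PInf[OF V col, of x k] by (cases "residual V x k") auto
  qed (use V in auto)
qed

lemma mem_Col_if_residual_tight:
  assumes V: "\<forall>i k. V i k \<noteq> \<infinity>" and col: "\<forall>k. \<exists>i. V i k \<noteq> -\<infinity>"
    and tight: "\<And>i. \<exists>k. ereal (x i) \<le> V i k + residual V x k"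
  shows "(\<lambda>i. ereal (x i)) \<in> Col V"
proof -
  have "trop_mv V (residual V x) = (\<lambda>i. ereal (x i))"
  proof (rule ext, rule antisym)
    fix i
    show "trop_mv V (residual V x) i \<le> ereal (x i)" by (rule trop_mv_residual_le[OF V col])
    obtain k where "ereal (x i) \<le> V i k + residual V x k" using tight by blast
    then show "ereal (x i) \<le> trop_mv V (residual V x) i"
      unfolding trop_mv_def by (meson SUP_upper2 UNIV_I)
  qed
  moreover have "residual V x \<in> Rmax_vecs"
    using residual_not_PInf[OF V col] by (simp add: Rmax_vecs_def)
  ultimately show ?thesis unfolding Col_def by (intro CollectI exI[of _ "residual V x"]) simp
qed

lemma hball_subset_Col_if_supereigenvector:
  fixes V :: "'n::finite \<Rightarrow> 'p::finite \<Rightarrow> ereal"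
  assumes V: "\<forall>i k. V i k \<noteq> \<infinity>" and row: "\<forall>i. \<exists>k. V i k \<noteq> -\<infinity>"
    and col: "\<forall>k. \<exists>i. V i k \<noteq> -\<infinity>"
    and c: "supereigenvector (T_op V) (- r) c"
  shows "hball (\<lambda>i. - c i) (ereal r) \<subseteq> Col V"
proof
  fix x assume "x \<in> hball (\<lambda>i. - c i) (ereal r)"
  then obtain xr where x: "x = (\<lambda>i. ereal (xr i))" and osc: "\<And>i j. (- c i - xr i) - (- c j - xr j) \<le> r"
    by (rule mem_hballD) blast
  have "\<exists>k. ereal (xr i) \<le> V i k + residual V xr k" for i
  proof -
    obtain k where k: "V i k \<noteq> -\<infinity>"
      and T_eq: "T_op V (\<lambda>j. ereal (c j)) i = - V i k + (SUP j\<in>{j. j \<noteq> i}. V j k + ereal (c j))"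
      using T_op_attained[of V i] row by blast
    obtain v where v: "V i k = ereal v" using k V by (cases "V i k") auto
    have "ereal (xr i - v) \<le> ereal (xr j) - V j k" for j
    proof (cases "j = i")
      case False
      show ?thesis
      proof (cases "V j k")
        case (real w)
        have "- V i k + (V j k + ereal (c j)) \<le> - V i k + (SUP j\<in>{j. j \<noteq> i}. V j k + ereal (c j))"
          using False by (intro add_left_mono SUP_upper) auto
        also have "\<dots> = T_op V (\<lambda>j. ereal (c j)) i" by (rule T_eq[symmetric])
        also have "\<dots> \<le> ereal (- r) + ereal (c i)" using c by (simp add: supereigenvector_def)
        finally have "- v + (w + c j) \<le> - r + c i" using real v by simp
        moreover have "(- c j - xr j) - (- c i - xr i) \<le> r" by (rule osc)
        ultimately show ?thesis using real by simp
      qed (use V in auto)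
    qed (use v in simp)
    then have "ereal (xr i - v) \<le> residual V xr k" unfolding residual_def by (rule INF_greatest)
    then have "ereal v + ereal (xr i - v) \<le> V i k + residual V xr k" unfolding v by (rule add_left_mono)
    then show ?thesis by auto
  qed
  then show "x \<in> Col V" unfolding x by (rule mem_Col_if_residual_tight[OF V col])
qed

lemma supereigenvector_if_hball_subset_Col:
  fixes V :: "'n::finite \<Rightarrow> 'p::finite \<Rightarrow> ereal"
  assumes V: "\<forall>i k. V i k \<noteq> \<infinity>" and r: "0 \<le> r"
    and sub: "hball (\<lambda>i. - c i) (ereal r) \<subseteq> Col V"
  shows "supereigenvector (T_op V) (- r) c"
  unfolding supereigenvector_def
proof
  fix l
  define g where "g j = - c j + (if j = l then r else 0)" for j
  have "(\<lambda>j. ereal (g j)) \<in> hball (\<lambda>i. - c i) (ereal r)"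
    using r unfolding g_def by (intro mem_hballI) auto
  with sub obtain z where z: "z \<in> Rmax_vecs" "(\<lambda>j. ereal (g j)) = trop_mv V z"
    unfolding Col_def by blast
  obtain k where k: "trop_mv V z l = V l k + z k"
    unfolding trop_mv_def using SUP_finite_attained[of "UNIV :: 'p set" "\<lambda>k. V l k + z k"] by auto
  have g_eq: "ereal (g j) = trop_mv V z j" for j using fun_cong[OF z(2), of j] by simp
  have g_ge: "V j k + z k \<le> ereal (g j)" for j
    unfolding g_eq trop_mv_def by (rule SUP_upper) simp
  have "z k \<noteq> \<infinity>" using z(1) by (simp add: Rmax_vecs_def)
  moreover have "V l k + z k = ereal (- c l + r)" using k g_eq[of l] by (simp add: g_def)
  ultimately obtain v q where vq: "V l k = ereal v" "z k = ereal q" "v + q = - c l + r"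
    using V by (cases "V l k"; cases "z k") auto
  have "(SUP j\<in>{j. j \<noteq> l}. V j k + ereal (c j)) \<le> ereal (- q)"
  proof (rule SUP_least)
    fix j assume j: "j \<in> {j. j \<noteq> l}"
    show "V j k + ereal (c j) \<le> ereal (- q)"
    proof (cases "V j k")
      case (real w)
      then have "w + q \<le> - c j" using g_ge[of j] vq j by (simp add: g_def)
      then show ?thesis using real by simp
    qed (use V in auto)
  qed
  then have "- V l k + (SUP j\<in>{j. j \<noteq> l}. V j k + ereal (c j)) \<le> - V l k + ereal (- q)"
    by (rule add_left_mono)
  then have "T_op V (\<lambda>j. ereal (c j)) l \<le> - V l k + ereal (- q)"
    using T_op_le[of V l k "\<lambda>j. ereal (c j)"] vq by (auto elim: order_trans)
  also have "\<dots> = ereal (- r) + ereal (c l)" using vq by simp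
  finally show "T_op V (\<lambda>j. ereal (c j)) l \<le> ereal (- r) + ereal (c l)" .
qed

lemma radius_le_uminus_rho_if_hball_subset_Col:
  fixes V :: "'n::finite \<Rightarrow> 'p::finite \<Rightarrow> ereal"
  assumes V: "\<forall>i k. V i k \<noteq> \<infinity>" and row: "\<forall>i. \<exists>k. V i k \<noteq> -\<infinity>"
    and sub: "hball a s \<subseteq> Col V"
  shows "s \<le> - rho (T_op V)"
proof (rule dense_le)
  fix x assume "x < s"
  show "x \<le> - rho (T_op V)"
  proof (cases x)
    case (real z)
    show ?thesis
    proof (cases "0 \<le> z")
      case True
      have "hball (\<lambda>i. - (- a i)) (ereal z) \<subseteq> Col V"
        using sub \<open>x < s\<close> real by (auto simp: hball_def)
      then have "rho (T_op V) \<le> ereal (- z)"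
        by (rule rho_T_op_le_supereigenvalue[OF row supereigenvector_if_hball_subset_Col[OF V True]])
      then show ?thesis using real by (cases "rho (T_op V)") auto
    next
      case False
      then show ?thesis using real rho_T_op_nonpos[OF V row] by (cases "rho (T_op V)") auto
    qed
  qed (use \<open>x < s\<close> in auto)
qed

lemma uminus_rho_le_inrad_Col:
  fixes V :: "'n::finite \<Rightarrow> 'p::finite \<Rightarrow> ereal"
  assumes V: "\<forall>i k. V i k \<noteq> \<infinity>" and row: "\<forall>i. \<exists>k. V i k \<noteq> -\<infinity>"
    and col: "\<forall>k. \<exists>i. V i k \<noteq> -\<infinity>"
  shows "- rho (T_op V) \<le> inrad_Col V"
proof (rule dense_le)
  have radius: "ereal r \<le> inrad_Col V" if "0 \<le> r" "supereigenvector (T_op V) (- r) c" for r c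
  proof -
    have "hball (\<lambda>i. - c i) (ereal r) \<subseteq> Col V"
      using that(2) by (rule hball_subset_Col_if_supereigenvector[OF V row col])
    then show ?thesis unfolding inrad_Col_def using that(1) by (intro Sup_upper) auto
  qed
  fix x assume x: "x < - rho (T_op V)"
  show "x \<le> inrad_Col V"
  proof (cases x)
    case (real z)
    show ?thesis
    proof (cases "0 \<le> z")
      case True
      have "rho (T_op V) < ereal (- z)" using x real by (cases "rho (T_op V)") auto
      then obtain c where "supereigenvector (T_op V) (- z) c"
        using rho_T_op_ge_if_no_supereigenvector[OF V row] by (meson not_le)
      then show ?thesis using radius[OF True] real by blast
    next
      case False
      obtain c where "supereigenvector (T_op V) 0 c" using supereigenvector_T_op_zero[OF V row] .
      then have "0 \<le> inrad_Col V" using radius[of 0 c] by (simp add: zero_ereal_def)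
      moreover have "x \<le> 0" using False real by simp
      ultimately show ?thesis by simp
    qed
  qed (use x in auto)
qed

lemma inrad_Col_eq_uminus_rho:
  fixes V :: "'n::finite \<Rightarrow> 'p::finite \<Rightarrow> ereal"
  assumes V: "\<forall>i k. V i k \<noteq> \<infinity>" and row: "\<forall>i. \<exists>k. V i k \<noteq> -\<infinity>"
    and col: "\<forall>k. \<exists>i. V i k \<noteq> -\<infinity>"
  shows "inrad_Col V = - rho (T_op V)"
proof (rule antisym)
  show "inrad_Col V \<le> - rho (T_op V)"
    unfolding inrad_Col_def using radius_le_uminus_rho_if_hball_subset_Col[OF V row]
    by (blast intro: Sup_least)
qed (rule uminus_rho_le_inrad_Col[OF V row col])

theorem theorem3p3:
  fixes V :: "'n::finite \<Rightarrow> 'p::finite \<Rightarrow> ereal"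
  assumes "\<forall>i k. V i k \<noteq> \<infinity>"
    and "\<forall>i. \<exists>k. V i k \<noteq> -\<infinity>"
    and "\<forall>k. \<exists>i. V i k \<noteq> -\<infinity>"
  shows "rho (T_op V) \<le> 0
    \<and> - rho (T_op V) = inrad_Col V
    \<and> (\<forall>(r::real) (a::'n \<Rightarrow> real).
          rho (T_op V) = ereal r \<longrightarrow>
          (\<forall>i. T_op V (\<lambda>j. ereal (a j)) i \<le> ereal r + ereal (a i)) \<longrightarrow>
          hball (\<lambda>i. - a i) (ereal (- r)) \<subseteq> {x \<in> Col V. \<forall>i. \<bar>x i\<bar> \<noteq> \<infinity>}
          \<and> (\<forall>(b::'n \<Rightarrow> real) (s::ereal). 0 \<le> s \<and> hball b s \<subseteq> Col V \<longrightarrow> s \<le> ereal (- r)))"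
proof -
  note V = assms(1) and row = assms(2) and col = assms(3)
  have "hball (\<lambda>i. - a i) (ereal (- r)) \<subseteq> {x \<in> Col V. \<forall>i. \<bar>x i\<bar> \<noteq> \<infinity>}
      \<and> (\<forall>b s. 0 \<le> s \<and> hball b s \<subseteq> Col V \<longrightarrow> s \<le> ereal (- r))"
    if rho: "rho (T_op V) = ereal r" and a: "supereigenvector (T_op V) r a" for r a
  proof
    have "hball (\<lambda>i. - a i) (ereal (- r)) \<subseteq> Col V"
      using a by (intro hball_subset_Col_if_supereigenvector[OF V row col]) simp
    then show "hball (\<lambda>i. - a i) (ereal (- r)) \<subseteq> {x \<in> Col V. \<forall>i. \<bar>x i\<bar> \<noteq> \<infinity>}"
      using hball_subset_finite[of "\<lambda>i. - a i" "- r"] by (simp add: subset_iff)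
    show "\<forall>b s. 0 \<le> s \<and> hball b s \<subseteq> Col V \<longrightarrow> s \<le> ereal (- r)"
      using radius_le_uminus_rho_if_hball_subset_Col[OF V row] rho by fastforce
  qed
  then show ?thesis
    using rho_T_op_nonpos[OF V row] inrad_Col_eq_uminus_rho[OF V row col]
    unfolding supereigenvector_def by auto
qed

end
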